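(* Let $\alpha>-1$, $d\in\widetilde{D}$, $p=(L_n^{(\alpha+1)})_{n\in\mathbb{N}_0}$, $q=(L_n^{(\alpha)})_{n\in\mathbb{N}_0}$, and let $T=E_{p,d}$ be regarded as an operator in $H(q)$ with domain $\mathcal{P}_c$. Suppose $f=\sum_kf_kq_k$ and $g=\sum_kg_kq_k$ in $H(q)$ are such that $(f,g)$ lies in the closure of the graph $G(T)$ in $H(q)\times H(q)$. Then: (a) there exists an array $(h_{n,u})_{n,u\in\mathbb{N}_0}$ of complex numbers such that (a1) $h_{n,u}=0$ for all $u>n$; (a2) $\lim_{n\to\infty}h_{n,u}=f_u$ for each $u\in\mathbb{N}_0$; (a3) $\lim_{n\to\infty}h_{n,n}d_n=0$; (a4) $\lim_{n\to\infty}\sum_{u=1}^nh_{n,u}(d_u-d_{u-1})=g_0-f_0d_0$; (b) for every $k\in\mathbb{N}$, $g_k=g_0-f_0d_0+f_kd_k-\sum_{u=1}^kf_u(d_u-d_{u-1})$.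
   Context: $\mathcal{P}_c$ is the space of polynomials in one real variable with complex coefficients. For $\beta>-1$, $L_n^{(\beta)}(x)=\sum_{k=0}^n\frac{(-1)^k}{k!}\binom{n+\beta}{n-k}x^k$ is the generalized Laguerre polynomial. For a sequence $Q=(Q_n)$ of polynomials with $\deg Q_n=n$, $H(Q)$ is the completion of $\mathcal{P}_c$ with respect to the inner product making $(Q_n)$ orthonormal; $g\in H(Q)$ is written $g=\sum_kg_kQ_k$, $(g_k)\in\ell_2$. $\widetilde{D}$ is the set of non-constant sequences of non-zero complex numbers. For a polynomial sequence $p$ and $d\in\widetilde{D}$, $E_{p,d}$ is the linear map on $\mathcal{P}_c$ with $E_{p,d}(p_n)=d_np_n$. *)

theory Defs
  imports "HOL-Analysis.Analysis" "HOL-Computational_Algebra.Polynomial"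
begin

definition laguerre :: "real \<Rightarrow> nat \<Rightarrow> complex poly" where
  "laguerre \<beta> n = (\<Sum>k\<le>n. monom (complex_of_real ((-1) ^ k / fact k * ((real n + \<beta>) gchoose (n - k)))) k)"

definition poly_coords :: "(nat \<Rightarrow> complex poly) \<Rightarrow> complex poly \<Rightarrow> nat \<Rightarrow> complex" where
  "poly_coords Q P = (THE c. (\<forall>n > degree P. c n = 0) \<and> P = (\<Sum>n\<le>degree P. smult (c n) (Q n)))"

definition E_op :: "(nat \<Rightarrow> complex poly) \<Rightarrow> (nat \<Rightarrow> complex) \<Rightarrow> complex poly \<Rightarrow> complex poly" where
  "E_op p d P = (\<Sum>n\<le>degree P. smult (d n * poly_coords p P n) (p n))"

definition D_tilde :: "(nat \<Rightarrow> complex) set" where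
  "D_tilde = {d. (\<forall>n. d n \<noteq> 0) \<and> (\<exists>m n. d m \<noteq> d n)}"

text \<open>Elements of H(Q) are identified with their coefficient sequences in ell_2.\<close>
definition ell2 :: "(nat \<Rightarrow> complex) \<Rightarrow> bool" where
  "ell2 f \<longleftrightarrow> summable (\<lambda>k. (cmod (f k))\<^sup>2)"

definition dist_H :: "(nat \<Rightarrow> complex poly) \<Rightarrow> (nat \<Rightarrow> complex) \<Rightarrow> complex poly \<Rightarrow> real" where
  "dist_H Q f P = sqrt (\<Sum>k. (cmod (f k - poly_coords Q P k))\<^sup>2)"

definition in_graph_closure ::
  "(nat \<Rightarrow> complex poly) \<Rightarrow> (complex poly \<Rightarrow> complex poly) \<Rightarrow> (nat \<Rightarrow> complex) \<Rightarrow> (nat \<Rightarrow> complex) \<Rightarrow> bool" where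
  "in_graph_closure Q T f g \<longleftrightarrow>
     (\<exists>P :: nat \<Rightarrow> complex poly. (\<lambda>j. dist_H Q f (P j)) \<longlonglongrightarrow> 0 \<and> (\<lambda>j. dist_H Q g (T (P j))) \<longlonglongrightarrow> 0)"

end

theory Submission
  imports Defs
begin

text \<open>Since $L_n^{(\alpha+1)} = \sum_{k\le n} L_k^{(\alpha)}$, Abel summation makes $E_{p,d}$ act
explicitly on $q$-coordinates: if $P$ has $q$-coordinates $c$ and $E_{p,d}P$ has $q$-coordinates $e$,
then $e_0 - e_k = c_0 d_0 - c_k d_k + \sum_{u=1}^k c_u (d_u - d_{u-1})$. Convergence in $H(q)$ implies
convergence of each coordinate, so the identity passes to the closure of the graph, which is (b).

For (a), put $C = g_0 - f_0 d_0$ and $S_k = \sum_{u=1}^k f_u (d_u - d_{u-1})$; by (b) and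
$f_k, g_k \to 0$ we have $C + f_k d_k - S_k \to 0$. If $d$ jumps only finitely often, this forces
$S_k = C$ eventually and the truncations of $f$ form the array. Otherwise add to the $n$-th truncation
a correction at the last jump of $d$ before $n$, chosen to make the weighted sum exactly $C$: these
positions tend to infinity, so every column still converges to $f$.\<close>

locale graded_basis =
  fixes Q :: "nat \<Rightarrow> complex poly"
  assumes basis_nonzero: "Q n \<noteq> 0"
    and degree_basis: "degree (Q n) = n"
begin

lemma coeff_sum_basis_top:
  "coeff (\<Sum>n\<le>N. smult (c n) (Q n)) N = c N * lead_coeff (Q N)"
proof -
  have "coeff (Q n) N = 0" if "n < N" for n
    using that by (simp add: coeff_eq_0 degree_basis)
  then show ?thesis
    by (simp add: coeff_sum degree_basis sum.atMost_Suc_shift lessThan_Suc_atMost[symmetric])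
qed

lemma sum_basis_eq_0D:
  assumes "(\<Sum>n\<le>N. smult (c n) (Q n)) = 0" and "n \<le> N"
  shows "c n = 0"
  using assms
proof (induction N)
  case 0
  then show ?case using basis_nonzero[of 0] by simp
next
  case (Suc N)
  have "c (Suc N) * lead_coeff (Q (Suc N)) = 0"
    using Suc.prems(1) coeff_sum_basis_top[of c "Suc N"] by simp
  then have "c (Suc N) = 0" using basis_nonzero by simp
  then show ?case using Suc by (cases "n = Suc N") auto
qed

lemma sum_basis_inject:
  assumes "(\<Sum>n\<le>N. smult (c n) (Q n)) = (\<Sum>n\<le>N. smult (c' n) (Q n))" and "n \<le> N"
  shows "c n = c' n"
  using sum_basis_eq_0D[of "\<lambda>n. c n - c' n" N n] assms
  by (simp add: smult_diff_left sum_subtractf)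

lemma ex_sum_basis_lessThan:
  assumes "\<And>k. k \<ge> N \<Longrightarrow> coeff P k = 0"
  shows "\<exists>c. P = (\<Sum>n<N. smult (c n) (Q n))"
  using assms
proof (induction N arbitrary: P)
  case 0
  then have "P = 0" by (simp add: poly_eqI)
  then show ?case by simp
next
  case (Suc N)
  define a where "a = coeff P N / lead_coeff (Q N)"
  have "lead_coeff (Q N) \<noteq> 0" using basis_nonzero by simp
  then have "coeff (P - smult a (Q N)) k = 0" if "k \<ge> N" for k
    using that Suc.prems degree_basis[of N]
    by (cases "k = N") (auto simp: a_def coeff_eq_0)
  then obtain c where c: "P - smult a (Q N) = (\<Sum>n<N. smult (c n) (Q n))"
    using Suc.IH by blast
  have "P = (\<Sum>n<Suc N. smult ((c(N := a)) n) (Q n))"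
    using c by (simp add: algebra_simps)
  then show ?case by blast
qed

lemma ex_sum_basis:
  "\<exists>c. (\<forall>n>degree P. c n = 0) \<and> P = (\<Sum>n\<le>degree P. smult (c n) (Q n))"
proof -
  obtain c where "P = (\<Sum>n<Suc (degree P). smult (c n) (Q n))"
    using ex_sum_basis_lessThan[of "Suc (degree P)" P] by (auto simp: coeff_eq_0)
  then have "P = (\<Sum>n\<le>degree P. smult ((\<lambda>n. if n \<le> degree P then c n else 0) n) (Q n))"
    by (simp add: lessThan_Suc_atMost)
  then show ?thesis by (intro exI[of _ "\<lambda>n. if n \<le> degree P then c n else 0"]) auto
qed

lemma poly_coords_eqI:
  assumes P: "P = (\<Sum>n\<le>N. smult (c n) (Q n))" and c: "\<And>n. n > N \<Longrightarrow> c n = 0"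
  shows "poly_coords Q P = c"
proof -
  obtain c' where c': "\<forall>n>degree P. c' n = 0" "P = (\<Sum>n\<le>degree P. smult (c' n) (Q n))"
    using ex_sum_basis by blast
  define M where "M = max N (degree P)"
  have "(\<Sum>n\<le>M. smult (c n) (Q n)) = (\<Sum>n\<le>M. smult (c' n) (Q n))"
  proof -
    have "(\<Sum>n\<le>M. smult (c n) (Q n)) = P"
      unfolding P M_def by (rule sum.mono_neutral_right) (auto simp: c)
    also have "\<dots> = (\<Sum>n\<le>M. smult (c' n) (Q n))"
      using c'(1) by (subst c'(2), intro sum.mono_neutral_left) (auto simp: M_def)
    finally show ?thesis .
  qed
  then have "c n = c' n" for n
    using sum_basis_inject[of c M c' n] c[of n] c'(1) by (cases "n \<le> M") (auto simp: M_def)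
  then have "c = c'" by blast
  show ?thesis unfolding poly_coords_def
  proof (rule the_equality)
    show "(\<forall>n>degree P. c n = 0) \<and> P = (\<Sum>n\<le>degree P. smult (c n) (Q n))"
      using c' \<open>c = c'\<close> by simp
    fix c'' assume c'': "(\<forall>n>degree P. c'' n = 0) \<and> P = (\<Sum>n\<le>degree P. smult (c'' n) (Q n))"
    then have "c'' n = c n" for n
      using c' \<open>c = c'\<close> sum_basis_inject[of c'' "degree P" c' n] by (cases "n \<le> degree P") auto
    then show "c'' = c" by blast
  qed
qed

lemma
  shows poly_coords_sum: "P = (\<Sum>n\<le>degree P. smult (poly_coords Q P n) (Q n))"
    and poly_coords_eq_0: "n > degree P \<Longrightarrow> poly_coords Q P n = 0"
proof -
  obtain c where "\<forall>n>degree P. c n = 0" "P = (\<Sum>n\<le>degree P. smult (c n) (Q n))"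
    using ex_sum_basis by blast
  moreover from this have "poly_coords Q P = c" by (intro poly_coords_eqI) auto
  ultimately show "P = (\<Sum>n\<le>degree P. smult (poly_coords Q P n) (Q n))"
    and "n > degree P \<Longrightarrow> poly_coords Q P n = 0" by simp_all
qed

end

lemma smult_sum_right: "smult a (\<Sum>k\<in>S. f k) = (\<Sum>k\<in>S. smult a (f k))"
  by (induction S rule: infinite_finite_induct) (simp_all add: smult_add_right)

lemma sum_smult_partial_sums:
  fixes Q :: "nat \<Rightarrow> 'a::comm_semiring_0 poly"
  shows "(\<Sum>n\<le>D. smult (a n) (\<Sum>k\<le>n. Q k)) = (\<Sum>k\<le>D. smult (\<Sum>n=k..D. a n) (Q k))"
proof (induction D)
  case (Suc D)
  have "(\<Sum>k\<le>Suc D. smult (\<Sum>n=k..Suc D. a n) (Q k))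
      = (\<Sum>k\<le>Suc D. smult (\<Sum>n=k..D. a n) (Q k) + smult (a (Suc D)) (Q k))"
    by (intro sum.cong) (auto simp: smult_add_left)
  then show ?case
    using Suc.IH by (simp add: sum.distrib smult_sum_right)
qed simp

lemma summation_by_parts_diff_Suc:
  fixes c d :: "nat \<Rightarrow> 'a::comm_ring"
  shows "(\<Sum>n<k. d n * (c n - c (Suc n)))
       = c 0 * d 0 - c k * d k + (\<Sum>u=1..k. c u * (d u - d (u - 1)))"
  by (induction k) (simp_all add: algebra_simps)

lemma sum_atLeastAtMost_split_lessThan:
  fixes a :: "nat \<Rightarrow> 'a::comm_monoid_add"
  assumes "\<And>n. n > D \<Longrightarrow> a n = 0"
  shows "(\<Sum>n\<le>D. a n) = (\<Sum>n<k. a n) + (\<Sum>n=k..D. a n)"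
proof -
  define N where "N = max k (Suc D)"
  have "(\<Sum>n\<le>D. a n) = (\<Sum>n<N. a n)"
    using assms by (intro sum.mono_neutral_left) (auto simp: N_def)
  also have "\<dots> = (\<Sum>n<k. a n) + (\<Sum>n=k..<N. a n)"
    by (simp add: N_def atLeast0LessThan[symmetric] sum.atLeastLessThan_concat)
  also have "(\<Sum>n=k..<N. a n) = (\<Sum>n=k..D. a n)"
    using assms by (intro sum.mono_neutral_right) (auto simp: N_def)
  finally show ?thesis .
qed

lemma poly_coords_E_op:
  assumes Q: "graded_basis Q" and p: "graded_basis p" and p_sum: "\<And>n. p n = (\<Sum>k\<le>n. Q k)"
  shows "poly_coords Q (E_op p d P) k
       = (\<Sum>n=k..degree P. d n * (poly_coords Q P n - poly_coords Q P (Suc n)))"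
proof -
  define c where "c = poly_coords Q P"
  define D where "D = degree P"
  have c_0: "c n = 0" if "n > D" for n
    using graded_basis.poly_coords_eq_0[OF Q that[unfolded D_def]] by (simp add: c_def)
  have "P = (\<Sum>n\<le>D. smult (c n) (Q n))"
    unfolding c_def D_def by (rule graded_basis.poly_coords_sum[OF Q])
  also have "\<dots> = (\<Sum>k\<le>D. smult (\<Sum>n=k..D. c n - c (Suc n)) (Q k))"
    using c_0[of "Suc D"] sum_Suc_diff[of _ D "\<lambda>n. - c n"] by (intro sum.cong) auto
  also have "\<dots> = (\<Sum>n\<le>D. smult (c n - c (Suc n)) (p n))"
    unfolding p_sum by (rule sum_smult_partial_sums[symmetric])
  finally have "poly_coords p P = (\<lambda>n. c n - c (Suc n))"
    using c_0 by (intro graded_basis.poly_coords_eqI[OF p]) auto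
  then have "E_op p d P = (\<Sum>n\<le>D. smult (d n * (c n - c (Suc n))) (\<Sum>k\<le>n. Q k))"
    by (simp add: E_op_def D_def p_sum)
  also have "\<dots> = (\<Sum>k\<le>D. smult (\<Sum>n=k..D. d n * (c n - c (Suc n))) (Q k))"
    by (rule sum_smult_partial_sums)
  finally show ?thesis
    unfolding c_def[symmetric] D_def[symmetric] by (subst graded_basis.poly_coords_eqI[OF Q]) auto
qed

lemma poly_coords_E_op_diff:
  assumes "graded_basis Q" and "graded_basis p" and "\<And>n. p n = (\<Sum>k\<le>n. Q k)"
  shows "poly_coords Q (E_op p d P) 0 - poly_coords Q (E_op p d P) k
       = poly_coords Q P 0 * d 0 - poly_coords Q P k * d k
         + (\<Sum>u=1..k. poly_coords Q P u * (d u - d (u - 1)))"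
proof -
  define a where "a n = d n * (poly_coords Q P n - poly_coords Q P (Suc n))" for n
  have "a n = 0" if "n > degree P" for n
    using that graded_basis.poly_coords_eq_0[OF assms(1)] by (simp add: a_def)
  then have "(\<Sum>n=0..degree P. a n) - (\<Sum>n=k..degree P. a n) = (\<Sum>n<k. a n)"
    using sum_atLeastAtMost_split_lessThan[of "degree P" a k] by (simp add: atLeast0AtMost)
  then show ?thesis
    unfolding poly_coords_E_op[OF assms] a_def[symmetric] by (simp add: a_def summation_by_parts_diff_Suc)
qed

lemma coeff_laguerre:
  "coeff (laguerre \<beta> n) i =
     (if i \<le> n then complex_of_real ((-1) ^ i / fact i * ((real n + \<beta>) gchoose (n - i))) else 0)"
  unfolding laguerre_def by (simp add: coeff_sum coeff_monom)

lemma graded_basis_laguerre: "graded_basis (laguerre \<beta>)"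
proof
  fix n
  have top: "coeff (laguerre \<beta> n) n \<noteq> 0"
    by (simp add: coeff_laguerre)
  then show "laguerre \<beta> n \<noteq> 0" by auto
  show "degree (laguerre \<beta> n) = n"
    using top by (intro antisym degree_le le_degree) (auto simp: coeff_laguerre)
qed

lemma laguerre_Suc_eq_diff:
  "laguerre \<beta> (Suc n) = laguerre (\<beta> + 1) (Suc n) - laguerre (\<beta> + 1) n"
proof (rule poly_eqI)
  fix i
  show "coeff (laguerre \<beta> (Suc n)) i = coeff (laguerre (\<beta> + 1) (Suc n) - laguerre (\<beta> + 1) n) i"
  proof (cases "i \<le> n")
    case True
    then have "Suc n - i = Suc (n - i)" by simp
    moreover have "(real (Suc n) + (\<beta> + 1)) gchoose Suc (n - i)
        = ((real n + (\<beta> + 1)) gchoose (n - i)) + ((real (Suc n) + \<beta>) gchoose Suc (n - i))"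
      using gbinomial_Suc_Suc[of "real (Suc n) + \<beta>" "n - i"] by (simp add: algebra_simps)
    ultimately show ?thesis
      using True by (simp add: coeff_laguerre algebra_simps flip: of_real_diff)
  qed (auto simp: coeff_laguerre le_Suc_eq)
qed

lemma laguerre_plus_one_eq_sum: "laguerre (\<beta> + 1) n = (\<Sum>k\<le>n. laguerre \<beta> k)"
proof (induction n)
  case 0
  show ?case by (rule poly_eqI) (simp add: coeff_laguerre)
next
  case (Suc n)
  then show ?case by (simp add: laguerre_Suc_eq_diff[of \<beta> n])
qed

lemma ell2_tendsto_zero:
  assumes "ell2 f" shows "f \<longlonglongrightarrow> 0"
proof -
  have "(\<lambda>k. sqrt ((cmod (f k))\<^sup>2)) \<longlonglongrightarrow> sqrt 0"
    using assms unfolding ell2_def by (intro tendsto_real_sqrt summable_LIMSEQ_zero)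
  then show ?thesis by (simp add: tendsto_norm_zero_iff)
qed

context graded_basis
begin

lemma norm_diff_poly_coords_le_dist_H:
  assumes "ell2 f"
  shows "cmod (f k - poly_coords Q P k) \<le> dist_H Q f P"
proof -
  have "\<forall>\<^sub>F n in sequentially. (cmod (f n - poly_coords Q P n))\<^sup>2 = (cmod (f n))\<^sup>2"
    using eventually_gt_at_top[of "degree P"] by eventually_elim (simp add: poly_coords_eq_0)
  then have "summable (\<lambda>n. (cmod (f n - poly_coords Q P n))\<^sup>2)"
    using assms unfolding ell2_def by (rule summable_cong[THEN iffD2])
  then have "(\<Sum>n\<in>{k}. (cmod (f n - poly_coords Q P n))\<^sup>2) \<le> (\<Sum>n. (cmod (f n - poly_coords Q P n))\<^sup>2)"
    by (rule sum_le_suminf) auto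
  then show ?thesis unfolding dist_H_def by (intro real_le_rsqrt) simp
qed

lemma tendsto_poly_coords:
  assumes "ell2 f" and "(\<lambda>j. dist_H Q f (P j)) \<longlonglongrightarrow> 0"
  shows "(\<lambda>j. poly_coords Q (P j) k) \<longlonglongrightarrow> f k"
proof -
  have "(\<lambda>j. f k - poly_coords Q (P j) k) \<longlonglongrightarrow> 0"
    using assms(2) by (rule Lim_null_comparison[rotated])
      (simp add: norm_diff_poly_coords_le_dist_H[OF assms(1)])
  then have "(\<lambda>j. f k - (f k - poly_coords Q (P j) k)) \<longlonglongrightarrow> f k - 0"
    by (intro tendsto_intros)
  then show ?thesis by simp
qed

end

lemma in_graph_closure_E_op_coords:
  assumes Q: "graded_basis Q" and p: "graded_basis p" and p_sum: "\<And>n. p n = (\<Sum>k\<le>n. Q k)"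
    and f: "ell2 f" and g: "ell2 g" and fg: "in_graph_closure Q (E_op p d) f g"
  shows "g k = g 0 - f 0 * d 0 + f k * d k - (\<Sum>u=1..k. f u * (d u - d (u - 1)))"
proof -
  obtain P where P_f: "(\<lambda>j. dist_H Q f (P j)) \<longlonglongrightarrow> 0"
    and P_g: "(\<lambda>j. dist_H Q g (E_op p d (P j))) \<longlonglongrightarrow> 0"
    using fg unfolding in_graph_closure_def by blast
  note coords_f = graded_basis.tendsto_poly_coords[OF Q f P_f]
  note coords_g = graded_basis.tendsto_poly_coords[OF Q g P_g]
  have "(\<lambda>j. poly_coords Q (E_op p d (P j)) 0 - poly_coords Q (E_op p d (P j)) k) \<longlonglongrightarrow> g 0 - g k"
    by (intro tendsto_intros coords_g)
  moreover have "(\<lambda>j. poly_coords Q (E_op p d (P j)) 0 - poly_coords Q (E_op p d (P j)) k)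
      \<longlonglongrightarrow> f 0 * d 0 - f k * d k + (\<Sum>u=1..k. f u * (d u - d (u - 1)))"
    unfolding poly_coords_E_op_diff[OF Q p p_sum] by (intro tendsto_intros coords_f)
  ultimately have "g 0 - g k = f 0 * d 0 - f k * d k + (\<Sum>u=1..k. f u * (d u - d (u - 1)))"
    by (rule LIMSEQ_unique)
  then show ?thesis by (simp add: algebra_simps)
qed

definition approximating_array ::
  "(nat \<Rightarrow> complex) \<Rightarrow> (nat \<Rightarrow> complex) \<Rightarrow> complex \<Rightarrow> (nat \<Rightarrow> nat \<Rightarrow> complex) \<Rightarrow> bool" where
  "approximating_array d f C h \<longleftrightarrow>
     (\<forall>n u. u > n \<longrightarrow> h n u = 0) \<and>
     (\<forall>u. (\<lambda>n. h n u) \<longlonglongrightarrow> f u) \<and>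
     (\<lambda>n. h n n * d n) \<longlonglongrightarrow> 0 \<and>
     (\<lambda>n. \<Sum>u=1..n. h n u * (d u - d (u - 1))) \<longlonglongrightarrow> C"

lemma sum_truncation_Suc:
  fixes f d :: "nat \<Rightarrow> complex"
  shows "(\<Sum>u=1..Suc n. (if u < Suc n then f u else 0) * (d u - d (u - 1)))
       = (\<Sum>u=1..n. f u * (d u - d (u - 1)))"
proof -
  have "(\<Sum>u=1..n. (if u < Suc n then f u else 0) * (d u - d (u - 1)))
      = (\<Sum>u=1..n. f u * (d u - d (u - 1)))"
    by (intro sum.cong) auto
  then show ?thesis by simp
qed

lemma approximating_array_truncation:
  fixes f d :: "nat \<Rightarrow> complex"
  assumes "\<forall>\<^sub>F n in sequentially. (\<Sum>u=1..n. f u * (d u - d (u - 1))) = C"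
  shows "approximating_array d f C (\<lambda>n u. if u < n then f u else 0)"
proof -
  have "\<forall>\<^sub>F n in sequentially. (\<Sum>u=1..n. (if u < n then f u else 0) * (d u - d (u - 1))) = C"
    using assms by (subst eventually_sequentially_Suc[symmetric]) (simp only: sum_truncation_Suc)
  moreover have "\<forall>\<^sub>F n in sequentially. (if u < n then f u else 0) = f u" for u
    using eventually_gt_at_top[of u] by eventually_elim simp
  ultimately show ?thesis
    unfolding approximating_array_def by (auto intro: tendsto_eventually)
qed

lemma approximating_array_corrected_truncation:
  fixes f d :: "nat \<Rightarrow> complex" and m :: "nat \<Rightarrow> nat"
  assumes m: "\<forall>\<^sub>F n in sequentially. 0 < m n \<and> m n < n \<and> d (m n) \<noteq> d (m n - 1)"
    and m_to_top: "filterlim m at_top sequentially"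
  shows "\<exists>h. approximating_array d f C h"
proof -
  define S where "S n = (\<Sum>u=1..n. f u * (d u - d (u - 1)))" for n
  define h where "h n u =
    (if u < n then f u + (if u = m n then (C - S (n - 1)) / (d u - d (u - 1)) else 0) else 0)" for n u
  have "\<forall>\<^sub>F n in sequentially. (\<Sum>u=1..n. h n u * (d u - d (u - 1))) = C"
    using m
  proof eventually_elim
    case (elim n)
    then obtain n' where n': "n = Suc n'" by (cases n) auto
    have "(\<Sum>u=1..n. h n u * (d u - d (u - 1)))
        = (\<Sum>u=1..n'. f u * (d u - d (u - 1))) + (\<Sum>u=1..n'. if u = m n then C - S n' else 0)"
      using elim unfolding n' h_def sum.distrib[symmetric]
      by (auto simp: sum.cl_ivl_Suc distrib_right intro!: sum.cong)
    also have "\<dots> = C" using elim by (simp add: n' S_def)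
    finally show ?case .
  qed
  moreover have "\<forall>\<^sub>F n in sequentially. h n u = f u" for u
    using m_to_top[unfolded filterlim_at_top, rule_format, of "Suc u"] eventually_gt_at_top[of u]
    by eventually_elim (simp add: h_def)
  ultimately have "approximating_array d f C h"
    unfolding approximating_array_def by (auto simp: h_def intro: tendsto_eventually)
  then show ?thesis by blast
qed

lemma ex_last_jump_before:
  fixes d :: "nat \<Rightarrow> complex"
  assumes "\<exists>\<^sub>F u in sequentially. d u \<noteq> d (u - 1)"
  shows "\<exists>m. (\<forall>\<^sub>F n in sequentially. 0 < m n \<and> m n < n \<and> d (m n) \<noteq> d (m n - 1)) \<and>
             filterlim m at_top sequentially"
proof -
  define J where "J n = {u. 0 < u \<and> u < n \<and> d u \<noteq> d (u - 1)}" for n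
  have J_finite: "finite (J n)" for n
    by (rule finite_subset[of _ "{..<n}"]) (auto simp: J_def)
  have jump_after: "\<exists>v\<ge>Z. v \<in> J (Suc v)" for Z
  proof -
    obtain v where "v \<ge> Suc Z" "d v \<noteq> d (v - 1)"
      using assms unfolding frequently_sequentially by blast
    then show ?thesis by (intro exI[of _ v]) (auto simp: J_def)
  qed
  have Max_J: "Max (J n) \<in> J n" and le_Max_J: "v \<le> Max (J n)" if "v \<in> J n" for v n
    using that J_finite by (auto intro: Max_in)
  have last_jump: "\<forall>\<^sub>F n in sequentially. Max (J n) \<in> J n \<and> Z \<le> Max (J n)" for Z
  proof -
    obtain v where "v \<ge> Z" "v \<in> J (Suc v)" using jump_after by blast
    then have "v \<in> J n" if "n > v" for n using that by (auto simp: J_def)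
    then show ?thesis using Max_J[of v] le_Max_J[of v] \<open>v \<ge> Z\<close> unfolding eventually_sequentially
      by (intro exI[of _ "Suc v"]) (auto simp: Suc_le_eq intro: order_trans)
  qed
  have "\<forall>\<^sub>F n in sequentially. 0 < Max (J n) \<and> Max (J n) < n \<and> d (Max (J n)) \<noteq> d (Max (J n) - 1)"
    using last_jump[of 0] by eventually_elim (simp add: J_def)
  moreover have "filterlim (\<lambda>n. Max (J n)) at_top sequentially"
    unfolding filterlim_at_top using last_jump by (blast intro: eventually_mono)
  ultimately show ?thesis by (intro exI[of _ "\<lambda>n. Max (J n)"] conjI)
qed

lemma partial_sums_eventually_eq:
  fixes f d :: "nat \<Rightarrow> complex"
  assumes d_const: "\<forall>\<^sub>F u in sequentially. d u = d (u - 1)"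
    and f: "f \<longlonglongrightarrow> 0"
    and lim: "(\<lambda>k. C + f k * d k - (\<Sum>u=1..k. f u * (d u - d (u - 1)))) \<longlonglongrightarrow> 0"
  shows "\<forall>\<^sub>F n in sequentially. (\<Sum>u=1..n. f u * (d u - d (u - 1))) = C"
proof -
  define S where "S n = (\<Sum>u=1..n. f u * (d u - d (u - 1)))" for n
  obtain M where M: "\<And>u. u \<ge> M \<Longrightarrow> d u = d (u - 1)"
    using d_const unfolding eventually_sequentially by blast
  have d_M: "d n = d M" if "n \<ge> M" for n
    using that by (induction n rule: dec_induct) (simp_all add: M)
  have S_M: "S n = S M" if "n \<ge> M" for n
    using that by (induction n rule: dec_induct) (simp_all add: S_def M)
  have "C + f k * d k - S k = C - S M + f k * d M" if "k \<ge> M" for k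
    using d_M[OF that] S_M[OF that] by simp
  then have "\<forall>\<^sub>F k in sequentially. C + f k * d k - S k = C - S M + f k * d M"
    unfolding eventually_sequentially by blast
  moreover have "(\<lambda>k. C - S M + f k * d M) \<longlonglongrightarrow> C - S M + 0 * d M"
    by (intro tendsto_intros f)
  ultimately have "(\<lambda>k. C + f k * d k - S k) \<longlonglongrightarrow> C - S M"
    by (simp add: Lim_transform_eventually eventually_mono)
  then have "C - S M = 0" using lim[folded S_def] by (rule LIMSEQ_unique)
  then have "S n = C" if "n \<ge> M" for n
    using S_M[OF that] by simp
  then show ?thesis
    unfolding eventually_sequentially S_def[symmetric] by blast
qed

lemma ex_approximating_array:
  fixes f d :: "nat \<Rightarrow> complex"
  assumes "f \<longlonglongrightarrow> 0"
    and "(\<lambda>k. C + f k * d k - (\<Sum>u=1..k. f u * (d u - d (u - 1)))) \<longlonglongrightarrow> 0"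
  shows "\<exists>h. approximating_array d f C h"
proof (cases "\<exists>\<^sub>F u in sequentially. d u \<noteq> d (u - 1)")
  case True
  then show ?thesis
    using ex_last_jump_before approximating_array_corrected_truncation by blast
next
  case False
  then have "\<forall>\<^sub>F u in sequentially. d u = d (u - 1)"
    by (simp add: not_frequently)
  then show ?thesis
    using partial_sums_eventually_eq assms approximating_array_truncation by blast
qed

theorem theorem6:
  fixes \<alpha> :: real and d f g :: "nat \<Rightarrow> complex"
  assumes "\<alpha> > -1"
    and "d \<in> D_tilde"
    and "ell2 f" and "ell2 g"
    and "in_graph_closure (laguerre \<alpha>) (E_op (laguerre (\<alpha> + 1)) d) f g"
  shows "(\<exists>h :: nat \<Rightarrow> nat \<Rightarrow> complex.
            (\<forall>n u. u > n \<longrightarrow> h n u = 0) \<and>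
            (\<forall>u. (\<lambda>n. h n u) \<longlonglongrightarrow> f u) \<and>
            (\<lambda>n. h n n * d n) \<longlonglongrightarrow> 0 \<and>
            (\<lambda>n. \<Sum>u=1..n. h n u * (d u - d (u - 1))) \<longlonglongrightarrow> g 0 - f 0 * d 0)
         \<and> (\<forall>k\<ge>1. g k = g 0 - f 0 * d 0 + f k * d k - (\<Sum>u=1..k. f u * (d u - d (u - 1))))"
proof -
  have b: "g k = g 0 - f 0 * d 0 + f k * d k - (\<Sum>u=1..k. f u * (d u - d (u - 1)))" for k
    using in_graph_closure_E_op_coords[OF graded_basis_laguerre graded_basis_laguerre
        laguerre_plus_one_eq_sum assms(3-5)] .
  have "(\<lambda>k. (g 0 - f 0 * d 0) + f k * d k - (\<Sum>u=1..k. f u * (d u - d (u - 1)))) = g"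
    using b by (intro ext) (rule sym)
  then have "(\<lambda>k. (g 0 - f 0 * d 0) + f k * d k - (\<Sum>u=1..k. f u * (d u - d (u - 1)))) \<longlonglongrightarrow> 0"
    using ell2_tendsto_zero[OF assms(4)] by simp
  then obtain h where "approximating_array d f (g 0 - f 0 * d 0) h"
    using ex_approximating_array[OF ell2_tendsto_zero[OF assms(3)]] by blast
  then show ?thesis
    using b unfolding approximating_array_def by blast
qed

end
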